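(* Let $P\in\mathbb{C}^{m\times m}$ be positive definite. Then for every Hermitian $H\in\mathbb{C}^{m\times m}$ with $\mathrm{tr}(H)=0$, $$\frac{\mathrm{tr}(H^2P)}{\mathrm{tr}(P)}-\frac{\mathrm{tr}(HP)^2}{\mathrm{tr}(P)^2}\ \ge\ \frac{\|H\|_F^2}{\mathrm{tr}(P)\,\mathrm{tr}(P^{-1})}.$$ *)

theory Defs
  imports "HOL-Analysis.Analysis"
begin

text \<open>Complex m x m matrices are rendered as complex^'m^'m (m = CARD('m)).\<close>

definition conj_transpose :: "complex^'n^'m \<Rightarrow> complex^'m^'n" where
  "conj_transpose A = transpose (map_matrix cnj A)"

definition hermitian :: "complex^'n^'n \<Rightarrow> bool" where
  "hermitian A \<longleftrightarrow> conj_transpose A = A"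

definition quad_form :: "complex^'n^'n \<Rightarrow> complex^'n \<Rightarrow> complex" where
  "quad_form A x = (\<Sum>i\<in>UNIV. cnj (x $ i) * ((A *v x) $ i))"

definition positive_definite :: "complex^'n^'n \<Rightarrow> bool" where
  "positive_definite A \<longleftrightarrow> hermitian A \<and>
     (\<forall>x. x \<noteq> 0 \<longrightarrow> Im (quad_form A x) = 0 \<and> 0 < Re (quad_form A x))"

definition frob_norm_sq :: "complex^'n^'m \<Rightarrow> real" where
  "frob_norm_sq A = (\<Sum>i\<in>UNIV. \<Sum>j\<in>UNIV. (cmod (A $ i $ j))\<^sup>2)"

end

theory Submission
  imports Defs
begin

(* Write <x, y>_P = x^* P y. The i-th column of P^-1 represents the coordinate functional
   x |-> x_i for this inner product, so Cauchy-Schwarz gives |x_i|^2 <= (P^-1)_ii <x, x>_P;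
   summing over i and then over the columns of a matrix M yields
   ||M||_F^2 <= tr(P^-1) tr(M^* P M).  For M = H - mu I with mu = tr(HP) / tr(P) the right
   hand side is tr(P^-1) (tr(H^2 P) - tr(HP)^2 / tr(P)), while tr H = 0 makes
   ||M||_F^2 = ||H||_F^2 + m mu^2 >= ||H||_F^2. *)

definition sesq_form :: "complex^'n^'n \<Rightarrow> complex^'n \<Rightarrow> complex^'n \<Rightarrow> complex" where
  "sesq_form A x y = (\<Sum>i\<in>UNIV. cnj (x $ i) * ((A *v y) $ i))"

lemma quad_form_eq_sesq_form: "quad_form A x = sesq_form A x x"
  by (simp add: quad_form_def sesq_form_def)

lemma sesq_form_zero_right [simp]: "sesq_form A x 0 = 0"
  by (simp add: sesq_form_def)

lemma sesq_form_axis_left: "sesq_form A (axis i 1) y = (A *v y) $ i"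
  unfolding sesq_form_def axis_def
  by (simp add: if_distrib[of cnj] if_distrib[of "\<lambda>z. z * w" for w] cong: if_cong)

lemma quad_form_axis: "quad_form A (axis i 1) = A $ i $ i"
  unfolding quad_form_eq_sesq_form sesq_form_axis_left
  unfolding matrix_vector_mult_def axis_def
  by (simp add: if_distrib[of "\<lambda>z. w * z" for w] cong: if_cong)

lemma sesq_form_diff_left: "sesq_form A (x - y) z = sesq_form A x z - sesq_form A y z"
  by (simp add: sesq_form_def left_diff_distrib sum_subtractf)

lemma sesq_form_diff_right: "sesq_form A x (y - z) = sesq_form A x y - sesq_form A x z"
  by (simp add: sesq_form_def matrix_vector_mult_diff_distrib right_diff_distrib sum_subtractf)

lemma sesq_form_scaleC_left: "sesq_form A (c *s x) y = cnj c * sesq_form A x y"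
  by (simp add: sesq_form_def sum_distrib_left mult.assoc)

lemma sesq_form_scaleC_right: "sesq_form A x (c *s y) = c * sesq_form A x y"
  by (simp add: sesq_form_def matrix_vector_mult_def sum_distrib_left mult_ac)

lemma quad_form_diff_scaleC:
  "quad_form A (x - c *s y) =
     quad_form A x - c * sesq_form A x y - cnj c * sesq_form A y x + cnj c * c * quad_form A y"
  unfolding quad_form_eq_sesq_form sesq_form_diff_left sesq_form_diff_right
    sesq_form_scaleC_left sesq_form_scaleC_right
  by (simp add: algebra_simps)

lemma hermitian_cnj_entry:
  assumes "hermitian A"
  shows "cnj (A $ j $ i) = A $ i $ j"
proof -
  have "conj_transpose A $ i $ j = A $ i $ j"
    using assms by (simp add: hermitian_def)
  then show ?thesis
    by (simp add: conj_transpose_def transpose_def)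
qed

lemma sesq_form_cnj_swap:
  assumes "hermitian A"
  shows "cnj (sesq_form A x y) = sesq_form A y x"
proof -
  have "cnj (sesq_form A x y) = (\<Sum>i\<in>UNIV. \<Sum>k\<in>UNIV. x $ i * A $ k $ i * cnj (y $ k))"
    by (simp add: sesq_form_def matrix_vector_mult_def sum_distrib_left hermitian_cnj_entry[OF assms]
        mult.assoc)
  also have "\<dots> = sesq_form A y x"
    by (subst sum.swap) (simp add: sesq_form_def matrix_vector_mult_def sum_distrib_left mult_ac)
  finally show ?thesis .
qed

lemma positive_definite_hermitian: "positive_definite A \<Longrightarrow> hermitian A"
  by (simp add: positive_definite_def)

lemma positive_definite_quad_form_real:
  assumes "positive_definite A"
  shows "quad_form A x = of_real (Re (quad_form A x))"
  using assms by (cases "x = 0") (auto simp: positive_definite_def quad_form_eq_sesq_form complex_eq_iff)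

lemma positive_definite_quad_form_nonneg:
  assumes "positive_definite A"
  shows "0 \<le> Re (quad_form A x)"
  using assms by (cases "x = 0") (auto simp: positive_definite_def quad_form_eq_sesq_form less_imp_le)

lemma positive_definite_Cauchy_Schwarz:
  assumes "positive_definite A"
  shows "(cmod (sesq_form A x y))\<^sup>2 \<le> Re (quad_form A x) * Re (quad_form A y)"
proof (cases "y = 0")
  case True
  then show ?thesis by (simp add: quad_form_eq_sesq_form)
next
  case False
  define a b c where "a = Re (quad_form A x)" and "b = sesq_form A x y" and "c = Re (quad_form A y)"
  have c_pos: "0 < c"
    using assms False by (simp add: positive_definite_def c_def)
  have "0 \<le> Re (quad_form A (x - (cnj b / of_real c) *s y))"
    by (rule positive_definite_quad_form_nonneg[OF assms])
  also have "\<dots> = a - (cmod b)\<^sup>2 / c"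
  proof -
    have "sesq_form A y x = cnj b"
      using sesq_form_cnj_swap[OF positive_definite_hermitian[OF assms]] by (simp add: b_def)
    moreover have "quad_form A x = of_real a" "quad_form A y = of_real c"
      using positive_definite_quad_form_real[OF assms] by (simp_all add: a_def c_def)
    moreover have "b * cnj b = of_real ((cmod b)\<^sup>2)" "cnj b * b = of_real ((cmod b)\<^sup>2)"
      by (metis complex_norm_square mult.commute)+
    ultimately have "quad_form A (x - (cnj b / of_real c) *s y) = of_real (a - (cmod b)\<^sup>2 / c)"
      using c_pos by (simp add: quad_form_diff_scaleC b_def[symmetric] field_simps)
    then show ?thesis by simp
  qed
  finally show ?thesis
    using c_pos by (simp add: a_def b_def c_def field_simps)
qed

lemma positive_definite_invertible:
  assumes "positive_definite A"
  shows "invertible A"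
proof -
  have "x = 0" if "A *v x = 0" for x
    using assms that by (force simp: positive_definite_def quad_form_def)
  then have "\<exists>B. B ** A = mat 1"
    using matrix_left_invertible_ker by blast
  then show ?thesis
    by (simp add: invertible_left_inverse)
qed

lemma invertible_matrix_inv_right: "invertible A \<Longrightarrow> A ** matrix_inv A = mat 1"
  unfolding invertible_def matrix_inv_def by (rule conjunct1, rule someI_ex)

lemma positive_definite_sesq_form_column_matrix_inv:
  assumes "positive_definite A"
  shows "sesq_form A x (column i (matrix_inv A)) = cnj (x $ i)"
proof -
  have "A *v column i (matrix_inv A) = column i (A ** matrix_inv A)"
    by (simp add: column_def matrix_vector_mult_def matrix_matrix_mult_def vec_eq_iff)
  also have "\<dots> = axis i 1"
    using invertible_matrix_inv_right[OF positive_definite_invertible[OF assms]]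
    by (simp add: column_def mat_def axis_def vec_eq_iff)
  finally show ?thesis
    unfolding sesq_form_def axis_def
    by (simp add: if_distrib[of "\<lambda>z. w * z" for w] cong: if_cong)
qed

lemma norm_vec_power2: "(norm x)\<^sup>2 = (\<Sum>i\<in>UNIV. (norm (x $ i))\<^sup>2)"
  by (simp add: norm_vec_def L2_set_def sum_nonneg)

lemma positive_definite_norm_le_quad_form:
  assumes "positive_definite A"
  shows "(norm x)\<^sup>2 \<le> Re (trace (matrix_inv A)) * Re (quad_form A x)"
proof -
  have "(cmod (x $ i))\<^sup>2 \<le> Re (quad_form A x) * Re (matrix_inv A $ i $ i)" for i
  proof -
    let ?c = "column i (matrix_inv A)"
    have "(cmod (x $ i))\<^sup>2 = (cmod (sesq_form A x ?c))\<^sup>2"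
      by (simp add: positive_definite_sesq_form_column_matrix_inv[OF assms])
    also have "\<dots> \<le> Re (quad_form A x) * Re (quad_form A ?c)"
      by (rule positive_definite_Cauchy_Schwarz[OF assms])
    also have "quad_form A ?c = cnj (matrix_inv A $ i $ i)"
      unfolding quad_form_eq_sesq_form positive_definite_sesq_form_column_matrix_inv[OF assms]
      by (simp add: column_def)
    finally show ?thesis by simp
  qed
  then have "(norm x)\<^sup>2 \<le> (\<Sum>i\<in>UNIV. Re (quad_form A x) * Re (matrix_inv A $ i $ i))"
    unfolding norm_vec_power2 by (intro sum_mono) simp
  also have "\<dots> = Re (trace (matrix_inv A)) * Re (quad_form A x)"
    by (simp add: trace_def sum_distrib_left mult.commute)
  finally show ?thesis .
qed

lemma positive_definite_trace_pos:
  assumes "positive_definite A"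
  shows "0 < Re (trace A)"
proof -
  have "0 < Re (A $ i $ i)" for i
    using assms by (simp add: positive_definite_def flip: quad_form_axis)
  then show ?thesis
    by (simp add: trace_def sum_pos)
qed

lemma positive_definite_trace_matrix_inv_pos:
  assumes "positive_definite A"
  shows "0 < Re (trace (matrix_inv A))"
proof -
  fix i
  have "1 \<le> Re (trace (matrix_inv A)) * Re (A $ i $ i)"
    using positive_definite_norm_le_quad_form[OF assms, of "axis i 1"] by (simp add: quad_form_axis)
  moreover have "0 \<le> Re (A $ i $ i)"
    using positive_definite_quad_form_nonneg[OF assms, of "axis i 1"] by (simp add: quad_form_axis)
  ultimately show ?thesis
    by (smt (verit) zero_less_mult_iff)
qed

lemma frob_norm_sq_columns: "frob_norm_sq M = (\<Sum>j\<in>UNIV. (norm (column j M))\<^sup>2)"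
  unfolding frob_norm_sq_def norm_vec_power2 by (subst sum.swap) (simp add: column_def)

lemma trace_conj_transpose_sandwich:
  "trace (conj_transpose M ** A ** M) = (\<Sum>j\<in>UNIV. quad_form A (column j M))"
  by (simp add: trace_def quad_form_def conj_transpose_def transpose_def map_matrix_def column_def
      matrix_matrix_mult_def matrix_vector_mult_def sum_distrib_left sum_distrib_right mult_ac)
    (rule sum.cong[OF refl], subst sum.swap, simp add: mult_ac)

lemma positive_definite_frob_norm_sq_le:
  assumes "positive_definite A"
  shows "frob_norm_sq M \<le> Re (trace (matrix_inv A)) * Re (trace (conj_transpose M ** A ** M))"
  unfolding frob_norm_sq_columns trace_conj_transpose_sandwich Re_sum sum_distrib_left
  by (intro sum_mono positive_definite_norm_le_quad_form[OF assms])

lemma frob_norm_sq_diff_mat: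
  fixes H :: "complex^'n^'n"
  shows "frob_norm_sq (H - mat (of_real \<mu>)) =
           frob_norm_sq H - 2 * \<mu> * Re (trace H) + real CARD('n) * \<mu>\<^sup>2"
proof -
  have entry: "(cmod ((H - mat (of_real \<mu>)) $ i $ j))\<^sup>2 =
      (cmod (H $ i $ j))\<^sup>2 + (if i = j then \<mu>\<^sup>2 - 2 * \<mu> * Re (H $ i $ i) else 0)" for i j
    by (cases "i = j") (simp_all add: mat_def cmod_power2 power2_diff)
  show ?thesis
    unfolding frob_norm_sq_def entry
    by (simp add: sum.distrib trace_def sum_subtractf sum_distrib_left)
qed

lemma sum_sesq_form_column_axis:
  fixes H A :: "complex^'n^'n"
  assumes "hermitian H"
  shows "(\<Sum>j\<in>UNIV. sesq_form A (column j H) (axis j 1)) = trace (H ** A)"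
  unfolding sesq_form_def axis_def
  by (simp add: trace_def column_def matrix_matrix_mult_def matrix_vector_mult_def
      hermitian_cnj_entry[OF assms] if_distrib[of "\<lambda>z. w * z" for w] cong: if_cong)

lemma sum_sesq_form_axis_column:
  fixes H A :: "complex^'n^'n"
  shows "(\<Sum>j\<in>UNIV. sesq_form A (axis j 1) (column j H)) = trace (H ** A)"
  unfolding trace_mul_sym[of H A]
  by (simp add: sesq_form_axis_left trace_def column_def matrix_matrix_mult_def
      matrix_vector_mult_def)

lemma sum_quad_form_axis: "(\<Sum>j\<in>UNIV. quad_form A (axis j 1)) = trace A"
  by (simp add: quad_form_axis trace_def)

lemma hermitian_sum_quad_form_column:
  fixes H A :: "complex^'n^'n"
  assumes "hermitian H"
  shows "(\<Sum>j\<in>UNIV. quad_form A (column j H)) = trace (H ** H ** A)"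
proof -
  have "(\<Sum>j\<in>UNIV. quad_form A (column j H)) = trace (H ** A ** H)"
    using assms by (simp add: hermitian_def flip: trace_conj_transpose_sandwich)
  also have "\<dots> = trace (H ** H ** A)"
    using trace_mul_sym[of "H ** A" H] by (simp add: matrix_mul_assoc)
  finally show ?thesis .
qed

lemma trace_sandwich_diff_mat:
  fixes H A :: "complex^'n^'n"
  assumes "hermitian H"
  shows "trace (conj_transpose (H - mat (of_real \<mu>)) ** A ** (H - mat (of_real \<mu>))) =
           trace (H ** H ** A) - 2 * of_real \<mu> * trace (H ** A) + of_real (\<mu>\<^sup>2) * trace A"
proof -
  let ?c = "complex_of_real \<mu>"
  have column_diff: "column j (H - mat ?c) = column j H - ?c *s axis j 1" for j
    by (simp add: column_def mat_def axis_def vec_eq_iff)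
  have "trace (conj_transpose (H - mat ?c) ** A ** (H - mat ?c)) =
      (\<Sum>j\<in>UNIV. quad_form A (column j H)) - ?c * (\<Sum>j\<in>UNIV. sesq_form A (column j H) (axis j 1))
      - ?c * (\<Sum>j\<in>UNIV. sesq_form A (axis j 1) (column j H))
      + ?c * ?c * (\<Sum>j\<in>UNIV. quad_form A (axis j 1))"
    unfolding trace_conj_transpose_sandwich column_diff quad_form_diff_scaleC
    by (simp add: sum.distrib sum_subtractf sum_distrib_left)
  also have "\<dots> = trace (H ** H ** A) - 2 * ?c * trace (H ** A) + of_real (\<mu>\<^sup>2) * trace A"
    by (simp add: hermitian_sum_quad_form_column[OF assms] sum_sesq_form_column_axis[OF assms]
        sum_sesq_form_axis_column sum_quad_form_axis power2_eq_square)
  finally show ?thesis .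
qed

theorem mainTheorem11:
  fixes P H :: "complex^'m^'m"
  assumes "positive_definite P"
    and "hermitian H"
    and "trace H = 0"
  shows "Re (trace (H ** H ** P)) / Re (trace P) - (Re (trace (H ** P)))\<^sup>2 / (Re (trace P))\<^sup>2
           \<ge> frob_norm_sq H / (Re (trace P) * Re (trace (matrix_inv P)))"
proof -
  define a b t s where "a = Re (trace (H ** H ** P))" and "b = Re (trace (H ** P))"
    and "t = Re (trace P)" and "s = Re (trace (matrix_inv P))"
  have t_pos: "0 < t" and s_pos: "0 < s"
    using positive_definite_trace_pos[OF assms(1)] positive_definite_trace_matrix_inv_pos[OF assms(1)]
    by (simp_all add: t_def s_def)
  define M where "M = H - mat (of_real (b / t))"
  have "frob_norm_sq H \<le> frob_norm_sq M"
    unfolding M_def frob_norm_sq_diff_mat using assms(3) by simp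
  also have "\<dots> \<le> s * Re (trace (conj_transpose M ** P ** M))"
    unfolding s_def by (rule positive_definite_frob_norm_sq_le[OF assms(1)])
  also have "Re (trace (conj_transpose M ** P ** M)) = a - 2 * (b / t) * b + (b / t)\<^sup>2 * t"
    unfolding M_def trace_sandwich_diff_mat[OF assms(2)] by (simp add: a_def b_def t_def)
  also have "a - 2 * (b / t) * b + (b / t)\<^sup>2 * t = a - b\<^sup>2 / t"
    using t_pos by (simp add: field_simps power2_eq_square)
  finally have "frob_norm_sq H / (t * s) \<le> (a - b\<^sup>2 / t) / t"
    using s_pos t_pos by (simp add: pos_divide_le_eq mult.commute)
  also have "\<dots> = a / t - b\<^sup>2 / t\<^sup>2"
    using t_pos by (simp add: field_simps power2_eq_square)
  finally show ?thesis
    by (simp add: a_def b_def t_def s_def)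
qed

end
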